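(* Let $p$ be a prime, let $\alpha$ be a nonnegative integer, and let $G$ be a finite $p$-group of order $p^{\alpha+1}$ having a cyclic subgroup of order $p^{\alpha}$. Then $n_G=\exp(G)$ if and only if either $G$ is cyclic, or $\exp(G)=p$, or ($p=2$ and) $G\cong D_{2^{\alpha+1}}=\langle x,y \mid x^{2^{\alpha}}=y^2=1,\ x^y=x^{-1}\rangle$.
   Context: For a finite group $G$ and $x\in G$, let $I_{\mathcal C}(x)=\{y\in G : \langle x,y\rangle \text{ is cyclic}\}$. For a nontrivial finite group $G$, $n_G=\max\{|I_{\mathcal C}(x)| : x\in G\setminus\{1\}\}$. $\exp(G)$ denotes the exponent of $G$. *)

theory Defs
  imports "HOL-Algebra.Algebra"
begin

definition cyclicizer :: "('a, 'b) monoid_scheme \<Rightarrow> 'a \<Rightarrow> 'a set" where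
  "cyclicizer G x = {y \<in> carrier G. cyclic_group (subgroup_generated G {x, y})}"

definition nG :: "('a, 'b) monoid_scheme \<Rightarrow> nat" where
  "nG G = Max {card (cyclicizer G x) | x. x \<in> carrier G - {\<one>\<^bsub>G\<^esub>}}"

definition group_exponent :: "('a, 'b) monoid_scheme \<Rightarrow> nat" where
  "group_exponent G = (LEAST m::nat. 0 < m \<and> (\<forall>g \<in> carrier G. g [^]\<^bsub>G\<^esub> m = \<one>\<^bsub>G\<^esub>))"

text \<open>Dihedral group of order 2n: element (a, s) stands for x^a y^s (s = True means y),
  where x has order n, y has order 2 and y x y^{-1} = x^{-1}.\<close>
definition dihedral_group :: "nat \<Rightarrow> (nat \<times> bool) monoid" where
  "dihedral_group n = \<lparr>carrier = {0..<n} \<times> UNIV,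
     monoid.mult = (\<lambda>(a, s) (b, t). ((if s then a + n - b else a + b) mod n, s \<noteq> t)),
     one = (0, False)\<rparr>"

end

theory Submission
  imports Defs "HOL-Number_Theory.Number_Theory"
begin

text \<open>
  If G is cyclic, every cyclicizer is all of G, so n_G = |G| = exp(G). Otherwise exp(G) = p^\<alpha>
  is the order of a generator h of the cyclic maximal subgroup H, and I_C(h) contains H; hence
  n_G = exp(G) exactly when all cyclicizers of nontrivial elements have at most p^\<alpha> elements.
  This bound holds if exp(G) = p, since then I_C(x) = \<langle>x\<rangle>, and in the dihedral group,
  where I_C(x) lies in the rotation subgroup or equals {1, x}.

  Conversely, let \<alpha> \<ge> 2 and assume the bound. The element z of order p in H has I_C(z) = H,
  and z lies in every nontrivial subgroup of H. So every y outside H has order p (otherwise a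
  nontrivial power of y falls into H, and y \<in> I_C(z)), and H is normal (a conjugate of h
  outside H would have order p). For p = 2, any y outside H and hy are involutions and give the
  dihedral presentation. For odd p, writing y h y\<inverse> = h^r, we get
  (hy)^p = h^(1 + r + ... + r^(p-1)), but r \<equiv> 1 (mod p) forces this exponent to be
  \<equiv> p (mod p^2), so hy would be an element outside H of order greater than p.
\<close>

section \<open>Geometric sums modulo p^2\<close>

lemma one_plus_mult_power_cong:
  fixes k m j :: nat
  shows "[(1 + k * m) ^ j = 1 + j * k * m] (mod m\<^sup>2)"
proof (induction j)
  case 0
  then show ?case by simp
next
  case (Suc j)
  have "(1 + k * m) ^ Suc j = (1 + k * m) * (1 + k * m) ^ j"
    by simp
  also have "[\<dots> = (1 + k * m) * (1 + j * k * m)] (mod m\<^sup>2)"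
    using Suc.IH by (rule cong_scalar_left)
  also have "(1 + k * m) * (1 + j * k * m) = (1 + Suc j * k * m) + (j * k\<^sup>2) * m\<^sup>2"
    by (simp add: algebra_simps power2_eq_square)
  also have "[\<dots> = 1 + Suc j * k * m] (mod m\<^sup>2)"
    by (simp add: cong_def)
  finally show ?case .
qed

lemma odd_dvd_sum_lessThan:
  fixes p :: nat
  assumes "odd p"
  shows "p dvd (\<Sum>j<p. j)"
proof -
  obtain q where p: "p = Suc (2 * q)"
    using assms by (auto elim: oddE)
  have "(\<Sum>j<p. j) = (\<Sum>j\<le>2 * q. j)"
    using p lessThan_Suc_atMost by simp
  also have "\<dots> = p * q"
    using gauss_sum_nat[of "2 * q"] p by (simp add: atMost_atLeast0)
  finally show ?thesis by simp
qed

lemma fermat_cong_self: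
  fixes p r :: nat
  assumes "Factorial_Ring.prime p"
  shows "[r ^ p = r] (mod p)"
proof (cases "p dvd r")
  case True
  then show ?thesis
    using assms by (simp add: cong_def prime_gt_0_nat dvd_power dvd_imp_mod_0 dvd_trans)
next
  case False
  have "[r ^ (p - 1) * r = 1 * r] (mod p)"
    using fermat_theorem[OF assms False] by (rule cong_scalar_right)
  moreover have "r ^ (p - 1) * r = r ^ p"
    using assms prime_gt_0_nat by (metis Suc_diff_1 power_Suc2)
  ultimately show ?thesis by simp
qed

lemma prime_square_not_dvd_geometric_sum:
  fixes p r :: nat
  assumes p: "Factorial_Ring.prime p" "odd p" and r: "[r ^ p = 1] (mod p)"
  shows "\<not> p\<^sup>2 dvd (\<Sum>j<p. r ^ j)"
proof
  assume dvd: "p\<^sup>2 dvd (\<Sum>j<p. r ^ j)"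
  have p1: "1 < p" using p prime_gt_1_nat by blast
  have "[r = 1] (mod p)"
    using cong_sym[OF fermat_cong_self[OF p(1)]] r by (rule cong_trans)
  then obtain k where k: "r = 1 + k * p"
    using p1 cong_to_1'_nat by auto
  have "[(\<Sum>j<p. r ^ j) = (\<Sum>j<p. 1 + j * k * p)] (mod p\<^sup>2)"
    unfolding k by (rule cong_sum) (rule one_plus_mult_power_cong)
  also have "(\<Sum>j<p. 1 + j * k * p) = p + (\<Sum>j<p. j) * (k * p)"
    by (simp only: sum.distrib sum_distrib_right mult.assoc) simp
  also have "[\<dots> = p] (mod p\<^sup>2)"
  proof -
    obtain q where "(\<Sum>j<p. j) = p * q"
      using odd_dvd_sum_lessThan[OF p(2)] by (elim dvdE)
    then have "p + (\<Sum>j<p. j) * (k * p) = p + (q * k) * p\<^sup>2"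
      by (simp add: power2_eq_square algebra_simps)
    also have "[\<dots> = p] (mod p\<^sup>2)"
      by (simp add: cong_def)
    finally show ?thesis .
  qed
  finally have "p\<^sup>2 dvd p"
    using dvd by (simp add: cong_def dvd_eq_mod_eq_0)
  then show False
    using p1 by (simp add: power2_eq_square)
qed

section \<open>Cyclic subgroups and twisted commutation\<close>

context group
begin

lemma nat_pow_in_generate:
  assumes "x \<in> carrier G"
  shows "x [^] (k :: nat) \<in> generate G {x}"
proof -
  have "x [^] k = x [^] int k"
    by (simp add: int_pow_int)
  then show ?thesis
    by (auto simp: generate_pow[OF assms])
qed

lemma generate_singleton_subset:
  assumes "y \<in> carrier G" "x \<in> generate G {y}"
  shows "generate G {x} \<subseteq> generate G {y}"
  using assms generate_is_subgroup by (intro generate_subgroup_incl) auto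

lemma cyclic_group_iff_generate:
  "cyclic_group G \<longleftrightarrow> (\<exists>g\<in>carrier G. carrier G = generate G {g})"
  by (auto simp: cyclic_group generate_pow full_SetCompr_eq)

lemma cyclic_subgroup_generator:
  assumes H: "subgroup H G" and "cyclic_group (G\<lparr>carrier := H\<rparr>)"
  obtains h where "h \<in> H" "H = generate G {h}"
proof -
  interpret H: group "G\<lparr>carrier := H\<rparr>"
    using subgroup_imp_group[OF H] .
  obtain h where h: "h \<in> H" "H = range (\<lambda>n::int. h [^]\<^bsub>G\<lparr>carrier := H\<rparr>\<^esub> n)"
    using H.cyclic_group assms(2) by auto
  have "h \<in> carrier G"
    using h(1) subgroup.subset[OF H] by blast
  then have "H = generate G {h}"
    using h int_pow_consistent[OF H h(1)] generate_pow by auto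
  then show thesis
    using h(1) that by blast
qed

lemma cyclic_group_subgroup_generated_iff:
  assumes "S \<subseteq> carrier G"
  shows "cyclic_group (subgroup_generated G S) \<longleftrightarrow> (\<exists>c\<in>carrier G. generate G S = generate G {c})"
proof -
  let ?K = "subgroup_generated G S"
  have carrier_K: "carrier ?K = generate G S"
    using assms by (simp add: carrier_subgroup_generated Int_absorb1)
  have powers: "range (\<lambda>n::int. c [^]\<^bsub>?K\<^esub> n) = generate G {c}" if "c \<in> carrier ?K" for c
  proof -
    have "c \<in> carrier G"
      using that carrier_subgroup_generated_subset by blast
    then show ?thesis
      using int_pow_subgroup_generated[OF that] generate_pow by auto
  qed
  have "cyclic_group ?K \<longleftrightarrow> (\<exists>c\<in>carrier ?K. carrier ?K = range (\<lambda>n::int. c [^]\<^bsub>?K\<^esub> n))"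
    by (rule group.cyclic_group) simp
  also have "\<dots> \<longleftrightarrow> (\<exists>c\<in>generate G S. generate G S = generate G {c})"
    using powers carrier_K by auto
  also have "\<dots> \<longleftrightarrow> (\<exists>c\<in>carrier G. generate G S = generate G {c})"
    using generate_in_carrier[OF assms] generate.incl[of _ "{_}" G] by blast
  finally show ?thesis .
qed

lemma generate_pair_cyclic:
  assumes g: "g \<in> carrier G" and x: "x \<in> generate G {g}" and y: "y \<in> generate G {g}"
  shows "\<exists>c\<in>carrier G. generate G {x, y} = generate G {c}"
proof -
  obtain a :: int where a: "x = g [^] a" using x generate_pow[OF g] by auto
  obtain b :: int where b: "y = g [^] b" using y generate_pow[OF g] by auto
  obtain u v where uv: "u * a + v * b = gcd a b" using bezout_int by blast
  define c where "c = g [^] gcd a b"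
  have xy: "x \<in> carrier G" "y \<in> carrier G" using a b g by auto
  have c: "c \<in> carrier G" using g c_def by simp
  have "c = x [^] u \<otimes> y [^] v"
    unfolding c_def a b using g
    by (simp add: int_pow_pow int_pow_mult[symmetric] uv[symmetric] mult.commute)
  then have "c \<in> generate G {x, y}"
    using generate_is_subgroup[of "{x, y}"] xy generate.incl[of _ "{x, y}" G]
    by (auto intro!: subgroup.m_closed subgroup_int_pow_closed)
  then have "generate G {c} \<subseteq> generate G {x, y}"
    using generate_is_subgroup xy by (intro generate_subgroup_incl) auto
  moreover have "x = c [^] (a div gcd a b)" "y = c [^] (b div gcd a b)"
    unfolding a b c_def using g by (simp_all add: int_pow_pow)
  then have "x \<in> generate G {c}" "y \<in> generate G {c}"
    using generate_pow[OF c] by auto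
  then have "generate G {x, y} \<subseteq> generate G {c}"
    using c generate_is_subgroup by (intro generate_subgroup_incl) auto
  ultimately show ?thesis
    using c by blast
qed

lemma nat_pow_eq_iff_cong:
  assumes "x \<in> carrier G"
  shows "x [^] (a :: nat) = x [^] (b :: nat) \<longleftrightarrow> [a = b] (mod ord x)"
proof -
  have "x [^] a = x [^] b \<longleftrightarrow> int (ord x) dvd int b - int a"
    using int_pow_eq[OF assms, of "int a" "int b"] by (simp add: int_pow_int)
  also have "\<dots> \<longleftrightarrow> [a = b] (mod ord x)"
    by (simp add: cong_iff_dvd_diff dvd_diff_commute flip: cong_int_iff)
  finally show ?thesis .
qed

lemma prime_power_socle_in_generate:
  assumes p: "Factorial_Ring.prime p" and h: "h \<in> carrier G" and ord_h: "ord h = p ^ n"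
    and "0 < n" and w: "w \<in> generate G {h}" "w \<noteq> \<one>"
  shows "h [^] (p ^ (n - 1)) \<in> generate G {w}"
proof -
  obtain a :: int where a: "w = h [^] a"
    using w(1) generate_pow[OF h] by auto
  have "\<not> int (ord h) dvd a"
    using w(2) a int_pow_eq_id[OF h] by simp
  then have not_dvd: "\<not> p ^ n dvd nat \<bar>a\<bar>"
    using ord_h by simp
  define d where "d = gcd (nat \<bar>a\<bar>) (p ^ n)"
  have "d dvd p ^ n"
    unfolding d_def by (rule gcd_dvd2)
  then obtain i where i: "i \<le> n" "d = p ^ i"
    using divides_primepow_nat[OF p] by blast
  have "i \<noteq> n"
    using not_dvd i gcd_dvd1[of "nat \<bar>a\<bar>" "p ^ n"] unfolding d_def by auto
  then have "d dvd p ^ (n - 1)"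
    using i by (simp add: le_imp_power_dvd)
  then obtain q where q: "p ^ (n - 1) = d * q"
    by (elim dvdE)
  obtain u v where "u * a + v * int (p ^ n) = gcd a (int (p ^ n))"
    using bezout_int by blast
  moreover have "gcd a (int (p ^ n)) = int d"
    unfolding d_def gcd_int_def by simp
  ultimately have "int (p ^ (n - 1)) = (u * a + v * int (p ^ n)) * int q"
    using q by simp
  then have "a * (u * int q) - int (p ^ (n - 1)) = int (ord h) * (- v * int q)"
    using ord_h by (simp add: algebra_simps)
  then have "h [^] int (p ^ (n - 1)) = h [^] (a * (u * int q))"
    using int_pow_eq[OF h] by simp
  also have "\<dots> = w [^] (u * int q)"
    unfolding a using h by (simp add: int_pow_pow)
  finally have "h [^] (p ^ (n - 1)) = w [^] (u * int q)"
    by (simp only: int_pow_int)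
  moreover have "w \<in> carrier G"
    using a h by simp
  ultimately show ?thesis
    using generate_pow by auto
qed

lemma pow_in_subgroup_of_index:
  assumes fin: "finite (carrier G)" and H: "subgroup H G"
    and index: "card (carrier G) = n * card H" and y: "y \<in> carrier G"
  shows "\<exists>j. 0 < j \<and> j \<le> n \<and> y [^] j \<in> H"
proof -
  define f where "f i = H #> y [^] (i :: nat)" for i
  have "card (rcosets H) * card H = n * card H"
    using lagrange[OF H] index by (simp add: order_def)
  moreover have "card H \<noteq> 0"
    using index fin y card_0_eq by fastforce
  ultimately have "card (rcosets H) = n"
    by simp
  moreover have "f ` {0..n} \<subseteq> rcosets H"
    unfolding f_def using rcosetsI[OF subgroup.subset[OF H]] y by auto
  moreover have "finite (rcosets H)"
    using fin by (simp add: rcosets_part_G[OF H] finite_UnionD)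
  ultimately have "\<not> inj_on f {0..n}"
    using card_inj_on_le[of f "{0..n}" "rcosets H"] by auto
  then obtain i j where ij: "i \<le> n" "j \<le> n" "i \<noteq> j" "f i = f j"
    unfolding inj_on_def by auto
  have power_in_H: "y [^] (j - i) \<in> H" if "i < j" "f i = f j" for i j
  proof -
    have "y [^] j \<otimes> inv (y [^] i) \<in> H"
      using subgroup.rcos_module_imp[OF H is_group _ repr_independenceD[OF H]] y that(2)
      unfolding f_def by simp
    moreover have "y [^] j \<otimes> inv (y [^] i) = y [^] (j - i)"
      using y that(1) nat_pow_mult[of y "j - i" i] by (simp add: inv_solve_right')
    ultimately show ?thesis
      by simp
  qed
  show ?thesis
  proof (cases "i < j")
    case True
    then show ?thesis
      using ij power_in_H by (intro exI[of _ "j - i"]) auto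
  next
    case False
    then show ?thesis
      using ij power_in_H[of j i] by (intro exI[of _ "i - j"]) auto
  qed
qed

lemma conj_nat_pow:
  assumes g: "g \<in> carrier G" and h: "h \<in> carrier G"
  shows "(g \<otimes> h \<otimes> inv g) [^] (m :: nat) = g \<otimes> h [^] m \<otimes> inv g"
proof (induction m)
  case 0
  then show ?case using g by simp
next
  case (Suc m)
  have cancel: "inv g \<otimes> (g \<otimes> x) = x" if "x \<in> carrier G" for x
    using g that by (simp flip: m_assoc)
  have "(g \<otimes> h \<otimes> inv g) [^] Suc m = (g \<otimes> h [^] m \<otimes> inv g) \<otimes> (g \<otimes> h \<otimes> inv g)"
    using Suc by simp
  also have "\<dots> = g \<otimes> h [^] Suc m \<otimes> inv g"
    using g h by (simp add: m_assoc cancel)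
  finally show ?case .
qed

lemma twisted_commute_pow:
  assumes h: "h \<in> carrier G" and y: "y \<in> carrier G" and twist: "y \<otimes> h = h [^] (r :: nat) \<otimes> y"
  shows "y [^] j \<otimes> h [^] m = h [^] (r ^ j * m) \<otimes> y [^] j"
proof -
  have one: "y \<otimes> h [^] m = h [^] (r * m) \<otimes> y" for m :: nat
  proof (induction m)
    case 0
    then show ?case using y by simp
  next
    case (Suc m)
    have "y \<otimes> h [^] Suc m = (y \<otimes> h [^] m) \<otimes> h"
      using y h by (simp add: m_assoc)
    also have "\<dots> = h [^] (r * m) \<otimes> (h [^] r \<otimes> y)"
      using Suc y h by (simp add: m_assoc flip: twist)
    also have "\<dots> = h [^] (r * Suc m) \<otimes> y"
      using h y by (simp add: nat_pow_mult add.commute flip: m_assoc)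
    finally show ?case .
  qed
  show ?thesis
  proof (induction j arbitrary: m)
    case 0
    then show ?case using h by simp
  next
    case (Suc j)
    have "y [^] Suc j \<otimes> h [^] m = y \<otimes> (y [^] j \<otimes> h [^] m)"
      by (simp only: nat_pow_Suc2 m_assoc nat_pow_closed y h)
    also have "\<dots> = (y \<otimes> h [^] (r ^ j * m)) \<otimes> y [^] j"
      using Suc y h by (simp add: m_assoc)
    also have "\<dots> = h [^] (r ^ Suc j * m) \<otimes> (y \<otimes> y [^] j)"
      using one y h by (simp add: m_assoc mult.assoc)
    also have "\<dots> = h [^] (r ^ Suc j * m) \<otimes> y [^] Suc j"
      by (simp only: nat_pow_Suc2 y)
    finally show ?case .
  qed
qed

lemma twisted_mult_pow:
  assumes h: "h \<in> carrier G" and y: "y \<in> carrier G" and twist: "y \<otimes> h = h [^] (r :: nat) \<otimes> y"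
  shows "(h \<otimes> y) [^] m = h [^] (\<Sum>j<m. r ^ j) \<otimes> y [^] m"
proof (induction m)
  case 0
  then show ?case using h by simp
next
  case (Suc m)
  let ?s = "\<Sum>j<m. r ^ j"
  have "(h \<otimes> y) [^] Suc m = h [^] ?s \<otimes> (y [^] m \<otimes> h) \<otimes> y"
    using Suc h y by (simp add: m_assoc)
  also have "\<dots> = h [^] ?s \<otimes> (h [^] (r ^ m) \<otimes> y [^] m) \<otimes> y"
    using twisted_commute_pow[OF h y twist, of m 1] h by simp
  also have "\<dots> = (h [^] ?s \<otimes> h [^] (r ^ m)) \<otimes> (y [^] m \<otimes> y)"
    using h y by (simp add: m_assoc)
  also have "\<dots> = h [^] (\<Sum>j<Suc m. r ^ j) \<otimes> y [^] Suc m"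
    using h y by (simp add: nat_pow_mult)
  finally show ?case .
qed

lemma twisted_pow_prime_ne_one:
  assumes p: "Factorial_Ring.prime p" "odd p" and h: "h \<in> carrier G" "ord h = p ^ n" "2 \<le> n"
    and y: "y \<in> carrier G" "y [^] p = \<one>" and twist: "y \<otimes> h = h [^] (r :: nat) \<otimes> y"
  shows "(h \<otimes> y) [^] p \<noteq> \<one>"
proof
  assume hy: "(h \<otimes> y) [^] p = \<one>"
  have "p\<^sup>2 dvd p ^ n"
    using h(3) by (simp add: le_imp_power_dvd)
  have "h [^] (1 :: nat) = h [^] (r ^ p)"
    using twisted_commute_pow[OF h(1) y(1) twist, of p 1] h y by simp
  then have "[1 = r ^ p] (mod p ^ n)"
    unfolding nat_pow_eq_iff_cong[OF h(1)] h(2) .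
  then have "[r ^ p = 1] (mod p)"
    using h(3) by (auto simp: cong_sym_eq intro: cong_dvd_modulus_nat dvd_power)
  moreover have "h [^] (\<Sum>j<p. r ^ j) = \<one>"
    using twisted_mult_pow[OF h(1) y(1) twist, of p] hy h y by simp
  then have "p ^ n dvd (\<Sum>j<p. r ^ j)"
    using pow_eq_id[OF h(1)] h(2) by simp
  then have "p\<^sup>2 dvd (\<Sum>j<p. r ^ j)"
    using \<open>p\<^sup>2 dvd p ^ n\<close> by (rule dvd_trans[rotated])
  ultimately show False
    using prime_square_not_dvd_geometric_sum[OF p] by blast
qed

section \<open>Cyclicizers, exponent and n_G\<close>

lemma cyclicizer_iff:
  assumes x: "x \<in> carrier G"
  shows "y \<in> cyclicizer G x \<longleftrightarrow> (\<exists>c\<in>carrier G. x \<in> generate G {c} \<and> y \<in> generate G {c})"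
proof
  assume "y \<in> cyclicizer G x"
  then obtain c where "c \<in> carrier G" "generate G {x, y} = generate G {c}"
    using x cyclic_group_subgroup_generated_iff[of "{x, y}"] by (auto simp: cyclicizer_def)
  then show "\<exists>c\<in>carrier G. x \<in> generate G {c} \<and> y \<in> generate G {c}"
    using generate.incl[of _ "{x, y}" G] by auto
next
  assume "\<exists>c\<in>carrier G. x \<in> generate G {c} \<and> y \<in> generate G {c}"
  then obtain c where c: "c \<in> carrier G" "x \<in> generate G {c}" "y \<in> generate G {c}"
    by blast
  then have "y \<in> carrier G"
    using generate_in_carrier[of "{c}"] by auto
  then show "y \<in> cyclicizer G x"
    using generate_pair_cyclic[OF c] x cyclic_group_subgroup_generated_iff[of "{x, y}"]
    by (auto simp: cyclicizer_def)
qed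

lemma generate_subset_cyclicizer:
  assumes "x \<in> carrier G"
  shows "generate G {x} \<subseteq> cyclicizer G x"
  using assms cyclicizer_iff generate.incl[of x "{x}" G] by blast

lemma cyclicizer_if_in_generate:
  assumes "y \<in> carrier G" "x \<in> generate G {y}"
  shows "y \<in> cyclicizer G x"
  using assms cyclicizer_iff generate_in_carrier[of "{y}"] generate.incl[of y "{y}" G] by blast

lemma finite_cyclicizer:
  "finite (carrier G) \<Longrightarrow> finite (cyclicizer G x)"
  unfolding cyclicizer_def by simp

lemma cyclicizer_cyclic:
  assumes "cyclic_group G" "x \<in> carrier G"
  shows "cyclicizer G x = carrier G"
proof -
  obtain g where g: "g \<in> carrier G" "carrier G = generate G {g}"
    using assms(1) cyclic_group_iff_generate by blast
  then show ?thesis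
    using assms(2) cyclicizer_iff unfolding cyclicizer_def by blast
qed

lemma group_exponent_spec:
  assumes "finite (carrier G)"
  shows "0 < group_exponent G \<and> (\<forall>g\<in>carrier G. g [^] group_exponent G = \<one>)"
proof -
  have "0 < order G \<and> (\<forall>g\<in>carrier G. g [^] order G = \<one>)"
    using assms order_gt_0_iff_finite pow_order_eq_1 by blast
  then show ?thesis
    unfolding group_exponent_def by (rule LeastI)
qed

lemma group_exponent_le:
  assumes "0 < m" "\<And>g. g \<in> carrier G \<Longrightarrow> g [^] m = \<one>"
  shows "group_exponent G \<le> m"
  unfolding group_exponent_def using assms by (intro Least_le) auto

lemma ord_dvd_group_exponent:
  assumes "finite (carrier G)" "g \<in> carrier G"
  shows "ord g dvd group_exponent G"
  using group_exponent_spec assms pow_eq_id by blast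

lemma group_exponent_eq_ord:
  assumes fin: "finite (carrier G)" and h: "h \<in> carrier G"
    and max: "\<And>g. g \<in> carrier G \<Longrightarrow> ord g dvd ord h"
  shows "group_exponent G = ord h"
proof (rule antisym)
  show "group_exponent G \<le> ord h"
    using ord_ge_1[OF fin h] max pow_eq_id by (intro group_exponent_le) auto
  show "ord h \<le> group_exponent G"
    using fin h group_exponent_spec ord_dvd_group_exponent by (simp add: dvd_imp_le)
qed

lemma group_exponent_cyclic:
  assumes fin: "finite (carrier G)" and "cyclic_group G"
  shows "group_exponent G = order G"
proof -
  obtain g where g: "g \<in> carrier G" "carrier G = generate G {g}"
    using assms(2) cyclic_group_iff_generate by blast
  then have "ord g = order G"
    by (simp add: generate_pow_card order_def)
  then show ?thesis
    using group_exponent_eq_ord[OF fin g(1)] ord_dvd_group_order by simp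
qed

lemma card_cyclicizer_le_nG:
  assumes "finite (carrier G)" "x \<in> carrier G" "x \<noteq> \<one>"
  shows "card (cyclicizer G x) \<le> nG G"
  unfolding nG_def using assms by (intro Max_ge) auto

lemma nG_le:
  assumes "finite (carrier G)" "x \<in> carrier G" "x \<noteq> \<one>"
    and "\<And>x. x \<in> carrier G \<Longrightarrow> x \<noteq> \<one> \<Longrightarrow> card (cyclicizer G x) \<le> B"
  shows "nG G \<le> B"
  unfolding nG_def using assms by (subst Max_le_iff) auto

lemma nG_eq_group_exponent_iff:
  assumes fin: "finite (carrier G)" and h: "h \<in> carrier G" "h \<noteq> \<one>"
    and ord_h: "ord h = group_exponent G"
  shows "nG G = group_exponent G \<longleftrightarrow>
           (\<forall>x\<in>carrier G - {\<one>}. card (cyclicizer G x) \<le> group_exponent G)"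
proof -
  have "group_exponent G = card (generate G {h})"
    using ord_h generate_pow_card[OF h(1)] by simp
  also have "\<dots> \<le> card (cyclicizer G h)"
    using finite_cyclicizer[OF fin] generate_subset_cyclicizer[OF h(1)] by (rule card_mono)
  also have "\<dots> \<le> nG G"
    using card_cyclicizer_le_nG[OF fin h] .
  finally have exp_le_nG: "group_exponent G \<le> nG G" .
  show ?thesis
  proof
    assume "nG G = group_exponent G"
    then show "\<forall>x\<in>carrier G - {\<one>}. card (cyclicizer G x) \<le> group_exponent G"
      using card_cyclicizer_le_nG[OF fin] by auto
  next
    assume "\<forall>x\<in>carrier G - {\<one>}. card (cyclicizer G x) \<le> group_exponent G"
    then have "nG G \<le> group_exponent G"
      using nG_le[OF fin h] by blast
    then show "nG G = group_exponent G"
      using exp_le_nG by simp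
  qed
qed

lemma nG_cyclic:
  assumes fin: "finite (carrier G)" and "cyclic_group G" and x: "x \<in> carrier G" "x \<noteq> \<one>"
  shows "nG G = order G"
proof (rule antisym)
  show "nG G \<le> order G"
    by (rule nG_le[OF fin x]) (simp add: cyclicizer_cyclic[OF assms(2)] order_def)
  show "order G \<le> nG G"
    using card_cyclicizer_le_nG[OF fin x] by (simp add: cyclicizer_cyclic[OF assms(2) x(1)] order_def)
qed

lemma card_cyclicizer_le_prime_exponent:
  assumes fin: "finite (carrier G)" and p: "Factorial_Ring.prime p"
    and exp: "\<And>g. g \<in> carrier G \<Longrightarrow> g [^] p = \<one>"
    and x: "x \<in> carrier G" "x \<noteq> \<one>"
  shows "card (cyclicizer G x) \<le> p"
proof -
  have ord_p: "ord g = p" if "g \<in> carrier G" "g \<noteq> \<one>" for g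
    using exp[OF that(1)] pow_eq_id[OF that(1)] p prime_nat_iff ord_eq_1 that by metis
  have finite_generate: "finite (generate G {g})" if "g \<in> carrier G" for g
    by (rule finite_subset[OF _ fin]) (use that generate_in_carrier in blast)
  have "cyclicizer G x \<subseteq> generate G {x}"
  proof
    fix y assume "y \<in> cyclicizer G x"
    then obtain c where c: "c \<in> carrier G" "x \<in> generate G {c}" "y \<in> generate G {c}"
      using cyclicizer_iff x by blast
    have "c \<noteq> \<one>"
      using c x generate_one by auto
    have "generate G {x} \<subseteq> generate G {c}"
      using generate_singleton_subset c by blast
    moreover have "card (generate G {x}) = card (generate G {c})"
      using ord_p c x \<open>c \<noteq> \<one>\<close> by (simp flip: generate_pow_card)
    ultimately have "generate G {x} = generate G {c}"
      using finite_generate[OF c(1)] by (intro card_subset_eq)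
    then show "y \<in> generate G {x}"
      using c by simp
  qed
  then have "card (cyclicizer G x) \<le> card (generate G {x})"
    using finite_generate[OF x(1)] by (rule card_mono[rotated])
  then show ?thesis
    using ord_p x by (simp flip: generate_pow_card)
qed

lemma card_cyclicizer_le_if_involutions_outside:
  assumes fin: "finite (carrier G)" and R: "subgroup R G"
    and involution: "\<And>g. g \<in> carrier G \<Longrightarrow> g \<notin> R \<Longrightarrow> g \<otimes> g = \<one>"
    and x: "x \<in> carrier G" "x \<noteq> \<one>"
  shows "card (cyclicizer G x) \<le> max (card R) 2"
proof -
  have small: "generate G {c} \<subseteq> {\<one>, c}" if "c \<in> carrier G" "c \<notin> R" for c
  proof (rule generate_subgroup_incl)
    have "inv c = c"
      using inv_equality involution that by blast
    then show "subgroup {\<one>, c} G"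
      using that involution by (intro subgroupI) auto
  qed (use that in auto)
  have "cyclicizer G x \<subseteq> (if x \<in> R then R else {\<one>, x})"
  proof
    fix y assume "y \<in> cyclicizer G x"
    then obtain c where c: "c \<in> carrier G" "x \<in> generate G {c}" "y \<in> generate G {c}"
      using cyclicizer_iff x by blast
    show "y \<in> (if x \<in> R then R else {\<one>, x})"
    proof (cases "c \<in> R")
      case True
      then have "generate G {c} \<subseteq> R"
        using R by (intro generate_subgroup_incl) auto
      then show ?thesis using c by auto
    next
      case False
      then have "x = c" "y \<in> {\<one>, c}"
        using small[OF c(1) False] c x by auto
      then show ?thesis using False by auto
    qed
  qed
  moreover have "finite R"
    using fin R subgroup.subset finite_subset by blast
  ultimately have "card (cyclicizer G x) \<le> (if x \<in> R then card R else card {\<one>, x})"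
    by (auto intro: card_mono split: if_splits)
  also have "\<dots> \<le> max (card R) 2"
    by (auto simp: card_insert_le_m1)
  finally show ?thesis .
qed

end

section \<open>Dihedral groups\<close>

lemma dihedral_group_mult [simp]:
  "(a, s) \<otimes>\<^bsub>dihedral_group n\<^esub> (b, t) = ((if s then a + n - b else a + b) mod n, s \<noteq> t)"
  by (simp add: dihedral_group_def)

lemma carrier_dihedral_group [simp]: "carrier (dihedral_group n) = {0..<n} \<times> UNIV"
  by (simp add: dihedral_group_def)

lemma dihedral_group_idempotent:
  assumes "u \<in> carrier (dihedral_group n)" "u \<otimes>\<^bsub>dihedral_group n\<^esub> u = u"
  shows "u = (0, False)"
proof -
  obtain a s where u: "u = (a, s)" and a: "a < n"
    using assms(1) by auto
  then have "\<not> s" "(a + a) mod n = a"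
    using assms(2) by (auto split: if_splits)
  moreover have "a = 0" if "(a + a) mod n = a"
  proof (cases "a + a < n")
    case False
    then have "(a + a) mod n = a + a - n"
      using a by (simp add: mod_if)
    then show ?thesis using that a by simp
  qed (use that in simp)
  ultimately show ?thesis
    using u by simp
qed

(* Unlike iso_set_sym, no group structure on G is needed: this is applied with
   G = dihedral_group n, whose group axioms are never established. *)
lemma inv_into_iso_if_mult_closed:
  assumes h: "h \<in> iso G H"
    and closed: "\<And>a b. a \<in> carrier G \<Longrightarrow> b \<in> carrier G \<Longrightarrow> a \<otimes>\<^bsub>G\<^esub> b \<in> carrier G"
  shows "inv_into (carrier G) h \<in> iso H G"
proof -
  let ?g = "inv_into (carrier G) h"
  have bij: "bij_betw h (carrier G) (carrier H)" and hom: "h \<in> hom G H"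
    using h by (auto simp: iso_def)
  then have g_bij: "bij_betw ?g (carrier H) (carrier G)"
    by (simp add: bij_betw_inv_into)
  have "?g (x \<otimes>\<^bsub>H\<^esub> y) = ?g x \<otimes>\<^bsub>G\<^esub> ?g y" if "x \<in> carrier H" "y \<in> carrier H" for x y
  proof (rule inv_into_f_eq)
    show "inj_on h (carrier G)"
      using bij bij_betw_def by blast
    have "?g x \<in> carrier G" "?g y \<in> carrier G"
      using g_bij that bij_betwE by blast+
    then show "?g x \<otimes>\<^bsub>G\<^esub> ?g y \<in> carrier G"
      by (rule closed)
    show "h (?g x \<otimes>\<^bsub>G\<^esub> ?g y) = x \<otimes>\<^bsub>H\<^esub> y"
      using hom \<open>?g x \<in> carrier G\<close> \<open>?g y \<in> carrier G\<close> bij that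
      by (simp add: hom_mult bij_betw_inv_into_right)
  qed
  then have "?g \<in> hom H G"
    using g_bij by (auto intro!: homI dest: bij_betwE)
  then show ?thesis
    using g_bij by (simp add: iso_def)
qed

definition dihedral_word :: "('a, 'b) monoid_scheme \<Rightarrow> 'a \<Rightarrow> 'a \<Rightarrow> nat \<times> bool \<Rightarrow> 'a" where
  "dihedral_word G h y = (\<lambda>(a, s). h [^]\<^bsub>G\<^esub> a \<otimes>\<^bsub>G\<^esub> (if s then y else \<one>\<^bsub>G\<^esub>))"

context group
begin

lemma iso_dihedral_group_rotations:
  assumes phi: "\<phi> \<in> iso G (dihedral_group n)"
  obtains R where "subgroup R G" "card R \<le> n" "\<And>g. g \<in> carrier G \<Longrightarrow> g \<notin> R \<Longrightarrow> g \<otimes> g = \<one>"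
proof -
  let ?D = "dihedral_group n"
  have hom: "\<And>a b. a \<in> carrier G \<Longrightarrow> b \<in> carrier G \<Longrightarrow> \<phi> (a \<otimes> b) = \<phi> a \<otimes>\<^bsub>?D\<^esub> \<phi> b"
    and into: "\<And>a. a \<in> carrier G \<Longrightarrow> \<phi> a \<in> carrier ?D"
    and inj: "inj_on \<phi> (carrier G)"
    using phi unfolding iso_def hom_def bij_betw_def by auto
  have reflection_mult: "snd (\<phi> (a \<otimes> b)) \<longleftrightarrow> snd (\<phi> a) \<noteq> snd (\<phi> b)"
    if "a \<in> carrier G" "b \<in> carrier G" for a b
    using hom[OF that] by (cases "\<phi> a", cases "\<phi> b") simp
  have phi_one: "\<phi> \<one> = (0, False)"
    using dihedral_group_idempotent[OF into] hom[of \<one> \<one>] by simp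
  define R where "R = {g \<in> carrier G. \<not> snd (\<phi> g)}"
  have "subgroup R G"
  proof (rule subgroupI)
    show "R \<subseteq> carrier G" "R \<noteq> {}"
      using phi_one unfolding R_def by auto
    show "inv a \<in> R" if "a \<in> R" for a
      using reflection_mult[of a "inv a"] phi_one that unfolding R_def by auto
    show "a \<otimes> b \<in> R" if "a \<in> R" "b \<in> R" for a b
      using reflection_mult[of a b] that unfolding R_def by auto
  qed
  moreover have "card R \<le> n"
  proof -
    have "\<phi> g \<in> {0..<n} \<times> {False}" if "g \<in> R" for g
      using into[of g] that unfolding R_def by (cases "\<phi> g") auto
    then have "\<phi> ` R \<subseteq> {0..<n} \<times> {False}"
      by blast
    moreover have "inj_on \<phi> R"
      using inj unfolding R_def by (rule inj_on_subset) auto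
    ultimately show ?thesis
      using card_inj_on_le[of \<phi> R "{0..<n} \<times> {False}"] by (simp add: card_cartesian_product)
  qed
  moreover have "g \<otimes> g = \<one>" if g: "g \<in> carrier G" "g \<notin> R" for g
  proof -
    obtain a where "\<phi> g = (a, True)" "a < n"
      using g into[OF g(1)] unfolding R_def by (cases "\<phi> g") auto
    then have "\<phi> (g \<otimes> g) = \<phi> \<one>"
      using hom[OF g(1) g(1)] phi_one by simp
    then show ?thesis
      using inj g(1) by (simp add: inj_on_def)
  qed
  ultimately show thesis
    using that by blast
qed

lemma card_cyclicizer_le_if_iso_dihedral_group:
  assumes fin: "finite (carrier G)" and "G \<cong> dihedral_group n" "2 \<le> n"
    and x: "x \<in> carrier G" "x \<noteq> \<one>"
  shows "card (cyclicizer G x) \<le> n"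
proof -
  obtain \<phi> where "\<phi> \<in> iso G (dihedral_group n)"
    using assms(2) unfolding is_iso_def by blast
  then obtain R where "subgroup R G" "card R \<le> n" "\<And>g. g \<in> carrier G \<Longrightarrow> g \<notin> R \<Longrightarrow> g \<otimes> g = \<one>"
    using iso_dihedral_group_rotations by blast
  then show ?thesis
    using card_cyclicizer_le_if_involutions_outside[OF fin _ _ x, of R] assms(3) by simp
qed

lemma dihedral_reflection_commute:
  assumes h: "h \<in> carrier G" "ord h = n" and y: "y \<in> carrier G" "y \<otimes> y = \<one>"
    and hy: "(h \<otimes> y) \<otimes> (h \<otimes> y) = \<one>" and "b \<le> n"
  shows "y \<otimes> h [^] b = h [^] (n - b) \<otimes> y"
proof -
  have inv_y: "inv y = y"
    using y inv_equality by blast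
  have reflected: "y \<otimes> h \<otimes> y \<in> carrier G"
    using h y by simp
  have "h \<otimes> (y \<otimes> h \<otimes> y) = \<one>"
    using hy h y by (simp add: m_assoc)
  then have inv_h: "inv h = y \<otimes> h \<otimes> y"
    using inv_comm[OF _ h(1) reflected] inv_equality[OF _ h(1) reflected] by blast
  have conj: "y \<otimes> h [^] m \<otimes> y = inv (h [^] m)" for m :: nat
  proof -
    have "y \<otimes> h [^] m \<otimes> y = (y \<otimes> h \<otimes> y) [^] m"
      using conj_nat_pow[OF y(1) h(1), of m] inv_y by simp
    also have "\<dots> = inv (h [^] m)"
      using nat_pow_inv[OF h(1)] by (simp flip: inv_h)
    finally show ?thesis .
  qed
  have "h [^] (n - b) \<otimes> h [^] b = \<one>"
    using assms(6) h nat_pow_mult[of h "n - b" b] pow_ord_eq_1[OF h(1)] by simp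
  then have "inv (h [^] b) = h [^] (n - b)"
    using h inv_equality by simp
  moreover have "y \<otimes> h [^] b = (y \<otimes> h [^] b \<otimes> y) \<otimes> y"
    using h y by (simp add: m_assoc)
  ultimately show ?thesis
    using conj by simp
qed

lemma dihedral_word_closed:
  assumes "h \<in> carrier G" "y \<in> carrier G"
  shows "dihedral_word G h y u \<in> carrier G"
  using assms by (cases u) (simp add: dihedral_word_def)

lemma dihedral_word_hom:
  assumes h: "h \<in> carrier G" "ord h = n" and y: "y \<in> carrier G" "y \<otimes> y = \<one>"
    and hy: "(h \<otimes> y) \<otimes> (h \<otimes> y) = \<one>"
  shows "dihedral_word G h y \<in> hom (dihedral_group n) G"
proof (rule homI)
  let ?D = "dihedral_group n" and ?\<psi> = "dihedral_word G h y"
  let ?Y = "\<lambda>t. if t then y else \<one>"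
  have Y: "?Y t \<in> carrier G" for t
    using y by simp
  have pow_mod: "h [^] (m mod n) = h [^] m" for m :: nat
  proof -
    have "h [^] m = (h [^] n) [^] (m div n) \<otimes> h [^] (m mod n)"
      using h by (simp add: nat_pow_pow nat_pow_mult)
    then show ?thesis
      using h pow_ord_eq_1[OF h(1)] by simp
  qed
  fix u v assume "u \<in> carrier ?D" "v \<in> carrier ?D"
  then obtain a s b t where u: "u = (a, s)" and v: "v = (b, t)" and "b < n"
    by auto
  show "?\<psi> (u \<otimes>\<^bsub>?D\<^esub> v) = ?\<psi> u \<otimes> ?\<psi> v"
  proof (cases s)
    case False
    then have "?\<psi> (u \<otimes>\<^bsub>?D\<^esub> v) = h [^] a \<otimes> (h [^] b \<otimes> ?Y t)"
      using h Y by (simp add: u v dihedral_word_def pow_mod m_assoc flip: nat_pow_mult)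
    then show ?thesis
      using False h Y by (simp add: u v dihedral_word_def)
  next
    case True
    have "a + n - b = a + (n - b)"
      using \<open>b < n\<close> by simp
    then have "?\<psi> (u \<otimes>\<^bsub>?D\<^esub> v) = h [^] a \<otimes> (h [^] (n - b) \<otimes> (y \<otimes> ?Y t))"
      using True h y by (simp add: u v dihedral_word_def pow_mod m_assoc flip: nat_pow_mult)
    also have "\<dots> = h [^] a \<otimes> (y \<otimes> h [^] b) \<otimes> ?Y t"
      using dihedral_reflection_commute[OF h y hy, of b] \<open>b < n\<close> h y Y by (simp add: m_assoc)
    finally show ?thesis
      using True h y Y by (simp add: u v dihedral_word_def m_assoc)
  qed
qed (use assms dihedral_word_closed in auto)

lemma dihedral_word_inj:
  assumes h: "h \<in> carrier G" "ord h = n" and y: "y \<in> carrier G" "y \<notin> generate G {h}"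
  shows "inj_on (dihedral_word G h y) (carrier (dihedral_group n))"
proof (rule inj_onI)
  have twisted: "h [^] a \<otimes> y \<noteq> h [^] b" for a b :: nat
  proof
    assume "h [^] a \<otimes> y = h [^] b"
    then have "y = inv (h [^] a) \<otimes> h [^] b"
      using h y by (simp add: inv_solve_left)
    moreover have "inv (h [^] a) \<in> generate G {h}"
      using nat_pow_in_generate h subgroup.m_inv_closed[OF generate_is_subgroup] by simp
    ultimately have "y \<in> generate G {h}"
      using nat_pow_in_generate h subgroup.m_closed[OF generate_is_subgroup] by simp
    then show False
      using y by simp
  qed
  fix u v
  assume "u \<in> carrier (dihedral_group n)" "v \<in> carrier (dihedral_group n)"
    and eq: "dihedral_word G h y u = dihedral_word G h y v"
  then obtain a s b t where u: "u = (a, s)" and v: "v = (b, t)" and "a < n" "b < n"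
    by auto
  have "s = t"
    using eq twisted[of a b] twisted[of b a] h y by (cases s; cases t) (auto simp: u v dihedral_word_def)
  then have "h [^] a = h [^] b"
    using eq h y by (cases t) (auto simp: u v dihedral_word_def)
  then have "a = b"
    using ord_inj[OF h(1)] h(2) \<open>a < n\<close> \<open>b < n\<close> unfolding inj_on_def by auto
  then show "u = v"
    using u v \<open>s = t\<close> by simp
qed

lemma iso_dihedral_groupI:
  assumes fin: "finite (carrier G)" and h: "h \<in> carrier G" "ord h = n"
    and card: "card (carrier G) = 2 * n"
    and y: "y \<in> carrier G" "y \<notin> generate G {h}" "y \<otimes> y = \<one>"
    and hy: "(h \<otimes> y) \<otimes> (h \<otimes> y) = \<one>"
  shows "G \<cong> dihedral_group n"
proof -
  let ?D = "dihedral_group n" and ?\<psi> = "dihedral_word G h y"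
  have inj: "inj_on ?\<psi> (carrier ?D)"
    using dihedral_word_inj[OF h y(1,2)] .
  then have "card (?\<psi> ` carrier ?D) = card (carrier G)"
    using card by (simp add: card_image card_cartesian_product)
  then have "?\<psi> ` carrier ?D = carrier G"
    using fin dihedral_word_closed[OF h(1) y(1)] by (intro card_subset_eq) auto
  then have "?\<psi> \<in> iso ?D G"
    using dihedral_word_hom[OF h y(1,3) hy] inj by (simp add: iso_def bij_betw_def)
  moreover have "0 < n"
    using ord_ge_1[OF fin h(1)] h(2) by simp
  ultimately have "inv_into (carrier ?D) ?\<psi> \<in> iso G ?D"
    by (intro inv_into_iso_if_mult_closed) auto
  then show ?thesis
    unfolding is_iso_def by blast
qed

end

section \<open>p-groups with a cyclic maximal subgroup\<close>

locale cyclic_maximal_pgroup = group G for G (structure) +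
  fixes p \<alpha> :: nat and h
  assumes finite_carrier: "finite (carrier G)"
    and prime_p: "Factorial_Ring.prime p"
    and card_carrier: "card (carrier G) = p ^ (\<alpha> + 1)"
    and generator_closed: "h \<in> carrier G"
    and ord_generator: "ord h = p ^ \<alpha>"
begin

lemma one_less_p: "1 < p"
  using prime_p prime_gt_1_nat by simp

lemma ord_eq_prime_power:
  assumes "g \<in> carrier G"
  obtains i where "i \<le> \<alpha> + 1" "ord g = p ^ i"
proof -
  have "ord g dvd p ^ (\<alpha> + 1)"
    using ord_dvd_group_order[OF assms] card_carrier by (simp add: order_def)
  then show thesis
    using divides_primepow_nat[OF prime_p] that by blast
qed

lemma ord_dvd_ord_generator:
  assumes "\<not> cyclic_group G" "g \<in> carrier G"
  shows "ord g dvd p ^ \<alpha>"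
proof -
  obtain i where i: "i \<le> \<alpha> + 1" "ord g = p ^ i"
    using ord_eq_prime_power[OF assms(2)] .
  have "i \<noteq> \<alpha> + 1"
  proof
    assume "i = \<alpha> + 1"
    then have "card (generate G {g}) = card (carrier G)"
      using i card_carrier assms(2) by (simp flip: generate_pow_card)
    then have "generate G {g} = carrier G"
      using finite_carrier generate_in_carrier[of "{g}"] assms(2) by (intro card_subset_eq) auto
    then have "cyclic_group G"
      using cyclic_group_iff_generate assms(2) by auto
    then show False
      using assms(1) by simp
  qed
  then show ?thesis
    using i by (simp add: le_imp_power_dvd)
qed

lemma group_exponent_not_cyclic:
  assumes "\<not> cyclic_group G"
  shows "group_exponent G = p ^ \<alpha>"
  using group_exponent_eq_ord[OF finite_carrier generator_closed] ord_dvd_ord_generator[OF assms]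
  by (simp add: ord_generator)

lemma alpha_pos_if_not_cyclic:
  assumes "\<not> cyclic_group G"
  shows "0 < \<alpha>"
proof (rule ccontr)
  assume "\<not> 0 < \<alpha>"
  then have "carrier G \<subseteq> {\<one>}"
    using ord_dvd_ord_generator[OF assms] ord_eq_1 by auto
  then have "card (carrier G) \<le> card {\<one>}"
    by (rule card_mono[rotated]) simp
  then show False
    using card_carrier one_less_p \<open>\<not> 0 < \<alpha>\<close> by simp
qed

lemma nG_eq_group_exponent_if_cyclic:
  assumes "cyclic_group G"
  shows "nG G = group_exponent G"
proof -
  obtain g where g: "g \<in> carrier G" "carrier G = generate G {g}"
    using assms cyclic_group_iff_generate by blast
  then have "ord g = p ^ (\<alpha> + 1)"
    using card_carrier by (simp add: generate_pow_card)
  then have "g \<noteq> \<one>"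
    using one_less_power[OF one_less_p, of "\<alpha> + 1"] by auto
  then show ?thesis
    using nG_cyclic[OF finite_carrier assms g(1)] group_exponent_cyclic[OF finite_carrier assms] by simp
qed

lemma cyclicizer_socle:
  assumes "0 < \<alpha>" and bound: "\<forall>x\<in>carrier G - {\<one>}. card (cyclicizer G x) \<le> p ^ \<alpha>"
  shows "cyclicizer G (h [^] p ^ (\<alpha> - 1)) = generate G {h}"
proof -
  let ?z = "h [^] p ^ (\<alpha> - 1)"
  have "p ^ \<alpha> = p ^ (\<alpha> - 1) * p"
    using assms(1) by (cases \<alpha>) (simp_all add: power_Suc2)
  then have "ord ?z = p"
    using ord_pow[OF generator_closed, of "p ^ (\<alpha> - 1)"] ord_generator one_less_p by simp
  then have z: "?z \<in> carrier G" "?z \<noteq> \<one>"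
    using generator_closed one_less_p by auto
  have "generate G {h} \<subseteq> cyclicizer G ?z"
    using cyclicizer_iff[OF z(1)] generator_closed nat_pow_in_generate by blast
  moreover have "card (cyclicizer G ?z) \<le> card (generate G {h})"
    using bound z generate_pow_card[OF generator_closed] ord_generator by simp
  ultimately have "generate G {h} = cyclicizer G ?z"
    by (intro card_seteq[OF finite_cyclicizer[OF finite_carrier]])
  then show ?thesis
    by simp
qed

lemma pow_prime_eq_one_outside:
  assumes "0 < \<alpha>" and bound: "\<forall>x\<in>carrier G - {\<one>}. card (cyclicizer G x) \<le> p ^ \<alpha>"
    and y: "y \<in> carrier G" "y \<notin> generate G {h}"
  shows "y [^] p = \<one>"
proof (rule ccontr)
  assume "y [^] p \<noteq> \<one>"
  obtain k where k: "ord y = p ^ k"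
    using ord_eq_prime_power[OF y(1)] by blast
  then have "\<not> p ^ k dvd p"
    using \<open>y [^] p \<noteq> \<one>\<close> pow_eq_id[OF y(1)] by simp
  then have "2 \<le> k"
    using le_imp_power_dvd[of k 1 p] by fastforce
  then have "p ^ 2 \<le> ord y"
    using k one_less_p by (simp add: power_increasing)
  have "card (carrier G) = p * card (generate G {h})"
    using card_carrier ord_generator by (simp flip: generate_pow_card[OF generator_closed])
  then obtain j where j: "0 < j" "j \<le> p" "y [^] j \<in> generate G {h}"
    using pow_in_subgroup_of_index[OF finite_carrier generate_is_subgroup _ y(1), of "{h}" p]
      generator_closed by auto
  have "y [^] j \<noteq> \<one>"
  proof
    assume "y [^] j = \<one>"
    then have "p ^ 2 \<le> j"
      using pow_eq_id[OF y(1)] j(1) \<open>p ^ 2 \<le> ord y\<close> by (meson dvd_imp_le order_trans)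
    moreover have "p < p ^ 2"
      using one_less_p by (simp add: power2_eq_square)
    ultimately show False
      using j(2) by linarith
  qed
  then have "h [^] p ^ (\<alpha> - 1) \<in> generate G {y [^] j}"
    using prime_power_socle_in_generate[OF prime_p generator_closed ord_generator assms(1) j(3)] by simp
  moreover have "generate G {y [^] j} \<subseteq> generate G {y}"
    using generate_singleton_subset[OF y(1) nat_pow_in_generate[OF y(1)]] .
  ultimately have "y \<in> cyclicizer G (h [^] p ^ (\<alpha> - 1))"
    using cyclicizer_if_in_generate y(1) by blast
  then show False
    using cyclicizer_socle[OF assms(1) bound] y(2) by simp
qed

lemma twisted_commute_generator:
  assumes "1 < \<alpha>" and bound: "\<forall>x\<in>carrier G - {\<one>}. card (cyclicizer G x) \<le> p ^ \<alpha>"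
    and g: "g \<in> carrier G"
  obtains r :: nat where "g \<otimes> h = h [^] r \<otimes> g"
proof -
  have "g \<otimes> h \<otimes> inv g \<in> generate G {h}"
  proof (rule ccontr)
    assume "g \<otimes> h \<otimes> inv g \<notin> generate G {h}"
    then have "g \<otimes> h [^] p \<otimes> inv g = \<one>"
      using pow_prime_eq_one_outside[OF _ bound, of "g \<otimes> h \<otimes> inv g"] assms(1) g generator_closed
      by (simp add: conj_nat_pow)
    then have "h [^] p = \<one>"
      using inv_solve_right'[of \<one> "g \<otimes> h [^] p" g] g generator_closed by simp
    then have "p ^ \<alpha> dvd p ^ 1"
      using pow_eq_id[OF generator_closed] ord_generator by simp
    then show False
      using assms(1) one_less_p power_dvd_imp_le by fastforce
  qed
  then obtain r :: nat where conj: "g \<otimes> h \<otimes> inv g = h [^] r"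
    using generate_pow_on_finite_carrier[OF finite_carrier generator_closed] by auto
  have "g \<otimes> h = (g \<otimes> h \<otimes> inv g) \<otimes> g"
    using g generator_closed by (simp add: m_assoc)
  then show thesis
    using that unfolding conj by blast
qed

lemma exists_outside_generate:
  obtains y where "y \<in> carrier G" "y \<notin> generate G {h}" "h \<otimes> y \<notin> generate G {h}"
proof -
  let ?H = "generate G {h}"
  have "card ?H < card (carrier G)"
    using card_carrier ord_generator one_less_p generate_pow_card[OF generator_closed] by simp
  then have "?H \<noteq> carrier G"
    by auto
  moreover have "?H \<subseteq> carrier G"
    using generate_in_carrier[of "{h}"] generator_closed by blast
  ultimately obtain y where y: "y \<in> carrier G" "y \<notin> ?H"
    by blast
  moreover have "h \<otimes> y \<notin> ?H"
  proof
    assume "h \<otimes> y \<in> ?H"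
    then have "inv h \<otimes> (h \<otimes> y) \<in> ?H"
      using subgroup.m_closed[OF generate_is_subgroup] subgroup.m_inv_closed[OF generate_is_subgroup]
        generate.incl[of h "{h}" G] generator_closed by simp
    then show False
      using y generator_closed by (simp flip: m_assoc)
  qed
  ultimately show thesis
    using that by blast
qed

lemma dihedral_if_cyclicizers_bounded:
  assumes "1 < \<alpha>" and bound: "\<forall>x\<in>carrier G - {\<one>}. card (cyclicizer G x) \<le> p ^ \<alpha>"
  shows "p = 2 \<and> G \<cong> dihedral_group (2 ^ \<alpha>)"
proof -
  obtain y where y: "y \<in> carrier G" "y \<notin> generate G {h}" and hy: "h \<otimes> y \<notin> generate G {h}"
    by (rule exists_outside_generate)
  then have y_pow: "y [^] p = \<one>" and hy_pow: "(h \<otimes> y) [^] p = \<one>"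
    using pow_prime_eq_one_outside[OF _ bound] assms(1) generator_closed by auto
  obtain r :: nat where twist: "y \<otimes> h = h [^] r \<otimes> y"
    using twisted_commute_generator[OF assms y(1)] .
  have "p = 2"
  proof (rule ccontr)
    assume "p \<noteq> 2"
    then have "odd p"
      using prime_odd_nat[OF prime_p] prime_ge_2_nat[OF prime_p] by simp
    moreover have "2 \<le> \<alpha>"
      using assms(1) by simp
    ultimately have "(h \<otimes> y) [^] p \<noteq> \<one>"
      using twisted_pow_prime_ne_one[OF prime_p _ generator_closed ord_generator _ y(1) y_pow twist]
      by blast
    then show False
      using hy_pow by contradiction
  qed
  moreover have "G \<cong> dihedral_group (2 ^ \<alpha>)"
  proof (rule iso_dihedral_groupI[OF finite_carrier generator_closed _ _ y])
    show "ord h = 2 ^ \<alpha>" "card (carrier G) = 2 * 2 ^ \<alpha>"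
      using ord_generator card_carrier \<open>p = 2\<close> by simp_all
    show "y \<otimes> y = \<one>" "(h \<otimes> y) \<otimes> (h \<otimes> y) = \<one>"
      using y_pow hy_pow y(1) generator_closed \<open>p = 2\<close> by (simp_all add: numeral_2_eq_2)
  qed
  ultimately show ?thesis ..
qed

lemma cyclicizers_bounded_iff:
  assumes "\<not> cyclic_group G"
  shows "(\<forall>x\<in>carrier G - {\<one>}. card (cyclicizer G x) \<le> p ^ \<alpha>) \<longleftrightarrow>
           group_exponent G = p \<or> (p = 2 \<and> G \<cong> dihedral_group (2 ^ \<alpha>))"
proof
  assume bound: "\<forall>x\<in>carrier G - {\<one>}. card (cyclicizer G x) \<le> p ^ \<alpha>"
  show "group_exponent G = p \<or> (p = 2 \<and> G \<cong> dihedral_group (2 ^ \<alpha>))"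
  proof (cases "\<alpha> = 1")
    case True
    then show ?thesis
      using group_exponent_not_cyclic[OF assms] by simp
  next
    case False
    then show ?thesis
      using dihedral_if_cyclicizers_bounded[OF _ bound] alpha_pos_if_not_cyclic[OF assms] by simp
  qed
next
  assume "group_exponent G = p \<or> (p = 2 \<and> G \<cong> dihedral_group (2 ^ \<alpha>))"
  then show "\<forall>x\<in>carrier G - {\<one>}. card (cyclicizer G x) \<le> p ^ \<alpha>"
  proof
    assume "group_exponent G = p"
    then show ?thesis
      using card_cyclicizer_le_prime_exponent[OF finite_carrier prime_p] group_exponent_spec[OF finite_carrier]
        group_exponent_not_cyclic[OF assms] by auto
  next
    assume "p = 2 \<and> G \<cong> dihedral_group (2 ^ \<alpha>)"
    moreover have "2 \<le> (2 :: nat) ^ \<alpha>"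
      using alpha_pos_if_not_cyclic[OF assms] by (simp add: self_le_power)
    ultimately show ?thesis
      using card_cyclicizer_le_if_iso_dihedral_group[OF finite_carrier] by auto
  qed
qed

end

theorem proposition2p7:
  fixes G (structure) and p \<alpha> :: nat
  assumes "Factorial_Ring.prime p"
    and "group G"
    and "finite (carrier G)"
    and "card (carrier G) = p ^ (\<alpha> + 1)"
    and "\<exists>H. subgroup H G \<and> card H = p ^ \<alpha> \<and> cyclic_group (G\<lparr>carrier := H\<rparr>)"
  shows "nG G = group_exponent G \<longleftrightarrow>
           (cyclic_group G \<or> group_exponent G = p \<or>
            (p = 2 \<and> G \<cong> dihedral_group (2 ^ \<alpha>)))"
proof -
  interpret group G
    by fact
  obtain H h where H: "subgroup H G" "card H = p ^ \<alpha>" "h \<in> H" "H = generate G {h}"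
    using assms(5) cyclic_subgroup_generator by metis
  then have "h \<in> carrier G"
    using subgroup.subset by blast
  then interpret cyclic_maximal_pgroup G p \<alpha> h
    using assms H generate_pow_card by unfold_locales auto
  show ?thesis
  proof (cases "cyclic_group G")
    case True
    then show ?thesis
      using nG_eq_group_exponent_if_cyclic by simp
  next
    case False
    have "h \<noteq> \<one>"
      using ord_generator one_less_power[OF one_less_p alpha_pos_if_not_cyclic[OF False]] by auto
    then show ?thesis
      using nG_eq_group_exponent_iff[OF finite_carrier generator_closed] cyclicizers_bounded_iff[OF False]
        group_exponent_not_cyclic[OF False] ord_generator False by simp
  qed
qed

end
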